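(* Consider the labeled Galton–Watson tree $\mathcal{T}$ with $\omega<\omega_0$, where $\omega_0=1/\tau$ and $\tau=\frac{1}{r(a+b)}\sum_{\ell\in\mathcal{L}}|a\mu(\ell)-b\nu(\ell)|$. Then as $R\to\infty$, for all $x\in\{1,\dots,r\}$, \[\mathbb{P}(\sigma_\rho=x\mid\mathcal{T},\sigma_{\partial\mathcal{T}_R})\to\frac1r\] asymptotically almost surely (in probability).
   Context: Labeled Galton–Watson tree $\mathcal{T}$ with root $\rho$, parameters $r\ge2$, positive constants $a,b$, $\omega>0$, finite label set $\mathcal{L}$ and distinct probability measures $\mu,\nu$ on $\mathcal{L}$: each node has a Poisson number of children with mean $d=\omega\frac{a+(r-1)b}{r(a+b)}$; the root's attribute $\sigma_\rho$ is uniform on $\{1,\dots,r\}$; each child independently has its parent's attribute with probability $\frac{a}{a+(r-1)b}$ and each of the $r-1$ other attributes with probability $\frac{b}{a+(r-1)b}$; each parent–child edge is independently labeled with distribution $\mu$ if the two attributes agree and $\nu$ otherwise. $\mathcal{T}_R$ is the tree truncated at depth $R$, $\partial\mathcal{T}_R$ its nodes at depth $R$, and $\sigma_{\partial\mathcal{T}_R}$ their attributes; conditioning on $\mathcal{T}$ means on the tree structure together with its edge labels. *)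

theory Defs
  imports "HOL-Probability.Probability"
begin

datatype ('a, 'l) ltree = Node 'a "('l \<times> ('a, 'l) ltree) list"

fun root_attr :: "('a, 'l) ltree \<Rightarrow> 'a" where
  "root_attr (Node x cs) = x"

definition gw_d :: "nat \<Rightarrow> real \<Rightarrow> real \<Rightarrow> real \<Rightarrow> real" where
  "gw_d r a b \<omega> = \<omega> * (a + (real r - 1) * b) / (real r * (a + b))"

text \<open>Attribute of a child of a parent with attribute x: same attribute with
probability a/(a+(r-1)b), otherwise uniform over the r-1 other attributes
(so each other attribute has probability b/(a+(r-1)b)).\<close>
definition child_attr :: "nat \<Rightarrow> real \<Rightarrow> real \<Rightarrow> nat \<Rightarrow> nat pmf" where
  "child_attr r a b x =
     bind_pmf (bernoulli_pmf (a / (a + (real r - 1) * b)))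
       (\<lambda>same. if same then return_pmf x else pmf_of_set ({1..r} - {x}))"

fun gw_tree :: "nat \<Rightarrow> real \<Rightarrow> real \<Rightarrow> real \<Rightarrow> 'l pmf \<Rightarrow> 'l pmf \<Rightarrow> nat \<Rightarrow> nat
                 \<Rightarrow> (nat, 'l) ltree pmf" where
  "gw_tree r a b \<omega> \<mu> \<nu> 0 x = return_pmf (Node x [])"
| "gw_tree r a b \<omega> \<mu> \<nu> (Suc R) x =
     bind_pmf (poisson_pmf (gw_d r a b \<omega>)) (\<lambda>k.
     map_pmf (Node x)
       (replicate_pmf k
          (bind_pmf (child_attr r a b x) (\<lambda>y.
           bind_pmf (if y = x then \<mu> else \<nu>) (\<lambda>l.
           map_pmf (\<lambda>t. (l, t)) (gw_tree r a b \<omega> \<mu> \<nu> R y))))))"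

definition gw_joint :: "nat \<Rightarrow> real \<Rightarrow> real \<Rightarrow> real \<Rightarrow> 'l pmf \<Rightarrow> 'l pmf \<Rightarrow> nat
                 \<Rightarrow> (nat, 'l) ltree pmf" where
  "gw_joint r a b \<omega> \<mu> \<nu> R = bind_pmf (pmf_of_set {1..r}) (gw_tree r a b \<omega> \<mu> \<nu> R)"

text \<open>Observation (T_R, sigma on the boundary of T_R): tree structure and
edge labels, with attributes erased except at the nodes at depth R.\<close>
fun observe :: "nat \<Rightarrow> ('a, 'l) ltree \<Rightarrow> ('a option, 'l) ltree" where
  "observe 0 (Node x cs) = Node (Some x) (map (\<lambda>(l, c). (l, observe 0 c)) cs)"
| "observe (Suc R) (Node x cs) = Node None (map (\<lambda>(l, c). (l, observe R c)) cs)"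

text \<open>P(sigma_rho = x | T_R, sigma_{boundary T_R}) evaluated at observation obs
(elementary conditional probability in the discrete joint law).\<close>
definition root_posterior :: "nat \<Rightarrow> real \<Rightarrow> real \<Rightarrow> real \<Rightarrow> 'l pmf \<Rightarrow> 'l pmf \<Rightarrow> nat
                 \<Rightarrow> (nat option, 'l) ltree \<Rightarrow> nat \<Rightarrow> real" where
  "root_posterior r a b \<omega> \<mu> \<nu> R obs x =
     measure_pmf.prob (gw_joint r a b \<omega> \<mu> \<nu> R) {t. root_attr t = x \<and> observe R t = obs}
     / measure_pmf.prob (gw_joint r a b \<omega> \<mu> \<nu> R) {t. observe R t = obs}"

definition gw_tau :: "nat \<Rightarrow> real \<Rightarrow> real \<Rightarrow> ('l::finite) pmf \<Rightarrow> 'l pmf \<Rightarrow> real" where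
  "gw_tau r a b \<mu> \<nu> = (1 / (real r * (a + b))) * (\<Sum>l\<in>UNIV. \<bar>a * pmf \<mu> l - b * pmf \<nu> l\<bar>)"

end

theory Submission
  imports Defs
begin

(* Write P_R(z) for the law of the observation (tree, edge labels, attributes at
   depth R) when the root has attribute z, and D for the L1 distance of pmfs
   (twice the total variation distance).

   1. Generic facts about D: it contracts under Markov kernels and maps, is
      convex under mixtures, and D(p^k, q^k) <= k * D(p, q) for i.i.d. lists.
   2. Contraction: a child's (edge label, observed subtree) law is an affine
      function of the vector (P_R(z))_z, and differences of it for two root
      attributes equal (sum_l |a mu(l) - b nu(l)|)/(a+(r-1)b) times
      differences of P_R.  Averaging over a Poisson(d) number of children
      yields  D(P_{R+1}(x), P_{R+1}(y)) <= omega tau D(P_R(x), P_R(y)),  hence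
      D(P_R(x), P_R(y)) <= 2 (omega tau)^R.
   3. The posterior of the root equals P_R(x)(w) / (r * M_R(w)), where M_R is
      the uniform mixture of the P_R(z).  A Markov-type inequality bounds the
      probability of a posterior deviation > eps by D(P_R(x), M_R)/(r eps),
      which is at most 2 (omega tau)^R / (r eps) -> 0 since omega tau < 1. *)

section \<open>The L1 distance of probability mass functions\<close>

definition l1_dist :: "'a pmf \<Rightarrow> 'a pmf \<Rightarrow> ennreal" where
  "l1_dist p q = (\<integral>\<^sup>+ w. ennreal \<bar>pmf p w - pmf q w\<bar> \<partial>count_space UNIV)"

lemma nn_integral_count_space_swap:
  "(\<integral>\<^sup>+ x. \<integral>\<^sup>+ y. f x y \<partial>count_space UNIV \<partial>count_space UNIV) =
   (\<integral>\<^sup>+ y. \<integral>\<^sup>+ x. f x y \<partial>count_space UNIV \<partial>count_space UNIV)"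
proof -
  have "(\<integral>\<^sup>+ x. \<integral>\<^sup>+ y. f x y \<partial>count_space UNIV \<partial>count_space UNIV) =
      integral\<^sup>N (count_space UNIV) (\<lambda>(x, y). f x y)"
    using nn_integral_fst_count_space[of "\<lambda>(x, y). f x y"] by simp
  also have "\<dots> = (\<integral>\<^sup>+ y. \<integral>\<^sup>+ x. f x y \<partial>count_space UNIV \<partial>count_space UNIV)"
    using nn_integral_snd_count_space[of "\<lambda>(x, y). f x y"] by simp
  finally show ?thesis .
qed

lemma abs_diff_le_nn_integral:
  fixes u v :: "'a \<Rightarrow> real"
  assumes "\<And>x. u x \<ge> 0" "\<And>x. v x \<ge> 0" "s \<ge> 0" "t \<ge> 0"
    and s: "ennreal s = (\<integral>\<^sup>+ x. ennreal (u x) \<partial>count_space UNIV)"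
    and t: "ennreal t = (\<integral>\<^sup>+ x. ennreal (v x) \<partial>count_space UNIV)"
  shows "ennreal \<bar>s - t\<bar> \<le> (\<integral>\<^sup>+ x. ennreal \<bar>u x - v x\<bar> \<partial>count_space UNIV)"
proof -
  let ?C = "\<integral>\<^sup>+ x. ennreal \<bar>u x - v x\<bar> \<partial>count_space UNIV"
  have s_le: "ennreal s \<le> ennreal t + ?C"
  proof -
    have "ennreal s \<le> (\<integral>\<^sup>+ x. ennreal (v x) + ennreal \<bar>u x - v x\<bar> \<partial>count_space UNIV)"
      unfolding s by (intro nn_integral_mono)
        (use assms in \<open>auto simp: ennreal_plus[symmetric] simp del: ennreal_plus\<close>)
    also have "\<dots> = ennreal t + ?C" by (simp add: nn_integral_add t)
    finally show ?thesis .
  qed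
  have t_le: "ennreal t \<le> ennreal s + ?C"
  proof -
    have "ennreal t \<le> (\<integral>\<^sup>+ x. ennreal (u x) + ennreal \<bar>u x - v x\<bar> \<partial>count_space UNIV)"
      unfolding t by (intro nn_integral_mono)
        (use assms in \<open>auto simp: ennreal_plus[symmetric] simp del: ennreal_plus\<close>)
    also have "\<dots> = ennreal s + ?C" by (simp add: nn_integral_add s)
    finally show ?thesis .
  qed
  show ?thesis
  proof (cases "?C = \<top>")
    case False
    then obtain c where c: "?C = ennreal c" "c \<ge> 0" by (cases ?C) auto
    from s_le t_le c assms(3,4) have "s \<le> t + c" "t \<le> s + c"
      by (simp_all add: ennreal_plus[symmetric] del: ennreal_plus)
    then show ?thesis using c by (auto intro: ennreal_leI)
  qed simp
qed

lemma nn_integral_pmf_eq_1: "(\<integral>\<^sup>+ w. ennreal (pmf p w) \<partial>count_space UNIV) = 1"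
  by (simp add: nn_integral_pmf emeasure_pmf)

lemma l1_dist_bind:
  "l1_dist (bind_pmf p f) (bind_pmf q g) \<le>
   (\<integral>\<^sup>+ x. \<integral>\<^sup>+ w. ennreal \<bar>pmf p x * pmf (f x) w - pmf q x * pmf (g x) w\<bar>
      \<partial>count_space UNIV \<partial>count_space UNIV)"
proof -
  have pmf_bind_nn: "ennreal (pmf (bind_pmf p f) w) =
      (\<integral>\<^sup>+ x. ennreal (pmf p x * pmf (f x) w) \<partial>count_space UNIV)" for p f w
    by (simp add: ennreal_pmf_bind nn_integral_measure_pmf ennreal_mult)
  have "l1_dist (bind_pmf p f) (bind_pmf q g) \<le>
     (\<integral>\<^sup>+ w. \<integral>\<^sup>+ x. ennreal \<bar>pmf p x * pmf (f x) w - pmf q x * pmf (g x) w\<bar>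
      \<partial>count_space UNIV \<partial>count_space UNIV)"
    unfolding l1_dist_def
    by (intro nn_integral_mono abs_diff_le_nn_integral) (simp_all add: pmf_bind_nn)
  also have "\<dots> = (\<integral>\<^sup>+ x. \<integral>\<^sup>+ w. ennreal \<bar>pmf p x * pmf (f x) w - pmf q x * pmf (g x) w\<bar>
      \<partial>count_space UNIV \<partial>count_space UNIV)"
    by (rule nn_integral_count_space_swap)
  finally show ?thesis .
qed

lemma l1_dist_bind_kernel: "l1_dist (bind_pmf p f) (bind_pmf q f) \<le> l1_dist p q"
proof -
  have "l1_dist (bind_pmf p f) (bind_pmf q f) \<le>
   (\<integral>\<^sup>+ x. \<integral>\<^sup>+ w. ennreal \<bar>pmf p x - pmf q x\<bar> * ennreal (pmf (f x) w)
      \<partial>count_space UNIV \<partial>count_space UNIV)"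
    by (rule order.trans[OF l1_dist_bind])
      (simp add: left_diff_distrib[symmetric] abs_mult ennreal_mult)
  also have "\<dots> = l1_dist p q"
    by (simp add: nn_integral_cmult nn_integral_pmf_eq_1 l1_dist_def)
  finally show ?thesis .
qed

lemma l1_dist_map: "l1_dist (map_pmf h p) (map_pmf h q) \<le> l1_dist p q"
  unfolding map_pmf_def by (rule l1_dist_bind_kernel)

lemma l1_dist_bind_mixture:
  "l1_dist (bind_pmf p f) (bind_pmf p g) \<le> (\<integral>\<^sup>+ x. l1_dist (f x) (g x) \<partial>measure_pmf p)"
proof -
  have "l1_dist (bind_pmf p f) (bind_pmf p g) \<le>
   (\<integral>\<^sup>+ x. \<integral>\<^sup>+ w. ennreal (pmf p x) * ennreal \<bar>pmf (f x) w - pmf (g x) w\<bar>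
      \<partial>count_space UNIV \<partial>count_space UNIV)"
    by (rule order.trans[OF l1_dist_bind])
      (simp add: right_diff_distrib[symmetric] abs_mult ennreal_mult)
  also have "\<dots> = (\<integral>\<^sup>+ x. l1_dist (f x) (g x) \<partial>measure_pmf p)"
    by (simp add: nn_integral_cmult l1_dist_def nn_integral_measure_pmf)
  finally show ?thesis .
qed

lemma l1_dist_le_2: "l1_dist p q \<le> 2"
proof -
  have "l1_dist p q \<le> (\<integral>\<^sup>+ w. ennreal (pmf p w) + ennreal (pmf q w) \<partial>count_space UNIV)"
    unfolding l1_dist_def
    by (intro nn_integral_mono) (simp add: ennreal_plus[symmetric] abs_le_iff
        add_increasing add_increasing2 del: ennreal_plus)
  also have "\<dots> = 2" by (simp add: nn_integral_add nn_integral_pmf_eq_1)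
  finally show ?thesis .
qed

lemma l1_dist_self [simp]: "l1_dist p p = 0"
  by (simp add: l1_dist_def)

lemma l1_dist_triangle: "l1_dist p s \<le> l1_dist p q + l1_dist q s"
proof -
  have "l1_dist p s \<le> (\<integral>\<^sup>+ w. ennreal \<bar>pmf p w - pmf q w\<bar> + ennreal \<bar>pmf q w - pmf s w\<bar>
      \<partial>count_space UNIV)"
    unfolding l1_dist_def
    by (intro nn_integral_mono) (simp add: ennreal_plus[symmetric] del: ennreal_plus)
  also have "\<dots> = l1_dist p q + l1_dist q s" by (simp add: nn_integral_add l1_dist_def)
  finally show ?thesis .
qed

text \<open>Subadditivity for i.i.d. lists: replace the entries one at a time.\<close>
lemma l1_dist_replicate:
  "l1_dist (replicate_pmf k p) (replicate_pmf k q) \<le> of_nat k * l1_dist p q"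
proof (induction k)
  case (Suc k)
  let ?cons = "\<lambda>A x. bind_pmf A (\<lambda>xs. return_pmf (x # xs))"
  have tail: "l1_dist (bind_pmf q (?cons (replicate_pmf k p))) (bind_pmf q (?cons (replicate_pmf k q)))
      \<le> of_nat k * l1_dist p q"
  proof -
    have "l1_dist (bind_pmf q (?cons (replicate_pmf k p))) (bind_pmf q (?cons (replicate_pmf k q)))
       \<le> (\<integral>\<^sup>+ x. l1_dist (?cons (replicate_pmf k p) x) (?cons (replicate_pmf k q) x) \<partial>measure_pmf q)"
      by (rule l1_dist_bind_mixture)
    also have "\<dots> \<le> (\<integral>\<^sup>+ x. of_nat k * l1_dist p q \<partial>measure_pmf q)"
      by (intro nn_integral_mono order.trans[OF l1_dist_bind_kernel Suc.IH])
    also have "\<dots> = of_nat k * l1_dist p q" by (simp add: measure_pmf.emeasure_space_1)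
    finally show ?thesis .
  qed
  have "l1_dist (replicate_pmf (Suc k) p) (replicate_pmf (Suc k) q) \<le>
        l1_dist (bind_pmf p (?cons (replicate_pmf k p))) (bind_pmf q (?cons (replicate_pmf k p))) +
        l1_dist (bind_pmf q (?cons (replicate_pmf k p))) (bind_pmf q (?cons (replicate_pmf k q)))"
    by (simp add: l1_dist_triangle)
  also have "\<dots> \<le> l1_dist p q + of_nat k * l1_dist p q"
    by (intro add_mono l1_dist_bind_kernel tail)
  finally show ?case by (simp add: algebra_simps)
qed simp

lemma l1_dist_ratio_deviation:
  fixes p q :: "'a pmf" and \<epsilon> :: real
  assumes eps: "\<epsilon> > 0"
  shows "ennreal (\<epsilon> * measure_pmf.prob q {w. \<epsilon> < \<bar>pmf p w / pmf q w - 1\<bar>}) \<le> l1_dist p q"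
proof -
  define E where "E = {w. \<epsilon> < \<bar>pmf p w / pmf q w - 1\<bar>}"
  have pointwise: "\<epsilon> * (pmf q w * indicator E w) \<le> \<bar>pmf p w - pmf q w\<bar>" for w
  proof (cases "w \<in> E \<and> pmf q w > 0")
    case True
    then have "\<epsilon> * pmf q w < \<bar>pmf p w / pmf q w - 1\<bar> * pmf q w"
      by (intro mult_strict_right_mono) (auto simp: E_def)
    also have "\<dots> = \<bar>pmf p w - pmf q w\<bar>"
      using True by (simp add: abs_mult[symmetric] field_simps)
    finally show ?thesis using True by simp
  next
    case False
    then have "pmf q w * indicator E w = 0"
      using pmf_nonneg[of q w] by (auto simp: indicator_def)
    then show ?thesis by (metis abs_ge_zero mult_zero_right)
  qed
  have "ennreal (\<epsilon> * measure_pmf.prob q E)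
      = (\<integral>\<^sup>+ w. ennreal (\<epsilon> * (pmf q w * indicator E w)) \<partial>count_space UNIV)"
    using eps by (simp add: measure_pmf.emeasure_eq_measure[symmetric] nn_integral_pmf[symmetric]
        nn_integral_count_space_indicator ennreal_mult ennreal_indicator nn_integral_cmult)
  also have "\<dots> \<le> l1_dist p q"
    unfolding l1_dist_def by (intro nn_integral_mono ennreal_leI pointwise)
  finally show ?thesis unfolding E_def .
qed


lemma poisson_mean:
  assumes d: "d > 0"
  shows "(\<integral>\<^sup>+ k. of_nat k \<partial>measure_pmf (poisson_pmf d)) = ennreal d"
proof -
  define f where "f n = d ^ n / fact n * exp (-d) * real n" for n
  have f_nonneg: "\<And>n. f n \<ge> 0" using d by (simp add: f_def)
  have "(\<lambda>n. d * exp (-d) * (d ^ n /\<^sub>R fact n)) sums (d * exp (-d) * exp d)"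
    by (intro sums_mult exp_converges)
  moreover have "(\<lambda>n. f (Suc n)) = (\<lambda>n. d * exp (-d) * (d ^ n /\<^sub>R fact n))"
    by (rule ext) (simp add: f_def divide_simps)
  moreover have "d * exp (-d) * exp d = d" by (simp add: exp_minus)
  ultimately have "(\<lambda>n. f (Suc n)) sums d" by simp
  then have "f sums (d + f 0)" by (simp only: sums_Suc_iff)
  then have "f sums d" by (simp add: f_def)
  then have "(\<Sum>n. ennreal (f n)) = ennreal d" by (rule suminf_ennreal_eq[OF f_nonneg])
  moreover have "(\<integral>\<^sup>+ k. of_nat k \<partial>measure_pmf (poisson_pmf d)) = (\<Sum>n. ennreal (f n))"
    using d by (simp add: nn_integral_measure_pmf nn_integral_count_space_nat f_def
        ennreal_of_nat_eq_real_of_nat ennreal_mult'[symmetric] mult_ac)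
  ultimately show ?thesis by simp
qed

section \<open>Recursive structure of the observed tree\<close>

lemma map_replicate_pmf:
  "map_pmf (map g) (replicate_pmf k p) = replicate_pmf k (map_pmf g p)"
proof (induction k)
  case (Suc k) then show ?case by (simp add: map_bind_pmf bind_map_pmf flip: Suc.IH)
qed simp

context
  fixes r :: nat and a b \<omega> :: real and \<mu> \<nu> :: "('l::finite) pmf"
begin

abbreviation obs_law :: "nat \<Rightarrow> nat \<Rightarrow> (nat option, 'l) ltree pmf" where
  "obs_law R z \<equiv> map_pmf (observe R) (gw_tree r a b \<omega> \<mu> \<nu> R z)"

abbreviation edge_law :: "nat \<Rightarrow> nat \<Rightarrow> 'l pmf" where
  "edge_law x z \<equiv> (if z = x then \<mu> else \<nu>)"

abbreviation child_obs :: "nat \<Rightarrow> nat \<Rightarrow> ('l \<times> (nat option, 'l) ltree) pmf" where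
  "child_obs R x \<equiv> bind_pmf (child_attr r a b x) (\<lambda>z.
     bind_pmf (edge_law x z) (\<lambda>l. map_pmf (Pair l) (obs_law R z)))"

lemma obs_law_Suc:
  "obs_law (Suc R) x =
   bind_pmf (poisson_pmf (gw_d r a b \<omega>)) (\<lambda>k. map_pmf (Node None) (replicate_pmf k (child_obs R x)))"
proof -
  let ?h = "\<lambda>(l, c). (l, observe R c)"
  let ?child = "bind_pmf (child_attr r a b x) (\<lambda>z.
     bind_pmf (edge_law x z) (\<lambda>l. map_pmf (Pair l) (gw_tree r a b \<omega> \<mu> \<nu> R z)))"
  have observe_Node: "observe (Suc R) \<circ> Node x = Node None \<circ> map ?h"
    by (rule ext) simp
  have "obs_law (Suc R) x = bind_pmf (poisson_pmf (gw_d r a b \<omega>))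
      (\<lambda>k. map_pmf (observe (Suc R) \<circ> Node x) (replicate_pmf k ?child))"
    by (simp add: map_bind_pmf pmf.map_comp)
  also have "\<dots> = bind_pmf (poisson_pmf (gw_d r a b \<omega>))
      (\<lambda>k. map_pmf (Node None) (replicate_pmf k (map_pmf ?h ?child)))"
    by (simp only: observe_Node pmf.map_comp[symmetric] map_replicate_pmf)
  also have "map_pmf ?h ?child = child_obs R x"
    by (simp add: map_bind_pmf pmf.map_comp o_def)
  finally show ?thesis .
qed

context
  assumes r2: "r \<ge> 2" and a_pos: "a > 0" and b_pos: "b > 0"
begin

abbreviation norm_const :: real where
  "norm_const \<equiv> a + (real r - 1) * b"

lemma norm_const_pos: "norm_const > 0"
  using r2 a_pos b_pos by (simp add: add_pos_nonneg)

lemma pmf_child_attr: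
  assumes x: "x \<in> {1..r}"
  shows "pmf (child_attr r a b x) z =
    (if z = x then a / norm_const else if z \<in> {1..r} then b / norm_const else 0)"
proof -
  have a_frac: "0 \<le> a / norm_const" "a / norm_const \<le> 1"
    using norm_const_pos a_pos b_pos r2 by (auto simp: divide_simps)
  have others_ne: "{1..r} - {x} \<noteq> {}"
  proof -
    have "(if x = 1 then 2 else 1) \<in> {1..r} - {x}" using r2 x by auto
    then show ?thesis by blast
  qed
  have card_others: "real (card ({Suc 0..r} - {x})) = real r - 1"
    using x r2 by (simp add: of_nat_diff)
  have other_frac: "1 - a / norm_const = (real r - 1) * b / norm_const"
    using norm_const_pos by (simp add: field_simps)
  have "pmf (child_attr r a b x) z =
      (a / norm_const) * pmf (return_pmf x) z
      + (1 - a / norm_const) * pmf (pmf_of_set ({1..r} - {x})) z"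
    unfolding child_attr_def pmf_bind
    by (subst integral_measure_pmf[of UNIV]) (auto simp: UNIV_bool a_frac add.commute)
  also have "pmf (pmf_of_set ({1..r} - {x})) z = (if z \<noteq> x \<and> z \<in> {1..r} then 1 / (real r - 1) else 0)"
    using others_ne card_others by (auto simp: indicator_def)
  finally show ?thesis
    using r2 by (simp add: other_frac)
qed

lemma set_child_attr:
  assumes x: "x \<in> {1..r}" shows "set_pmf (child_attr r a b x) \<subseteq> {1..r}"
  using x by (auto simp: set_pmf_iff pmf_child_attr split: if_splits)

lemma pmf_child_obs:
  assumes x: "x \<in> {1..r}"
  shows "pmf (child_obs R x) (l, w) =
     (a * pmf \<mu> l - b * pmf \<nu> l) / norm_const * pmf (obs_law R x) w
     + b * pmf \<nu> l / norm_const * (\<Sum>z\<in>{1..r}. pmf (obs_law R z) w)"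
proof -
  let ?f = "\<lambda>z. pmf (child_attr r a b x) z * (pmf (edge_law x z) l * pmf (obs_law R z) w)"
  have labelled: "pmf (bind_pmf (edge_law x z) (\<lambda>l. map_pmf (Pair l) (obs_law R z))) (l, w)
      = pmf (edge_law x z) l * pmf (obs_law R z) w" for z
    by (simp add: pair_pmf_def[symmetric] map_pmf_def[of "Pair _"] pmf_pair)
  have "pmf (child_obs R x) (l, w) = (\<Sum>z\<in>{1..r}. ?f z)"
    unfolding pmf_bind[of "child_attr r a b x"] labelled
    by (subst integral_measure_pmf[of "{1..r}"]) (use set_child_attr[OF x] in auto)
  also have "\<dots> = ?f x + (\<Sum>z\<in>{1..r} - {x}. b * pmf \<nu> l / norm_const * pmf (obs_law R z) w)"
    using x by (simp add: sum.remove pmf_child_attr ac_simps)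
  also have "\<dots> = ?f x + b * pmf \<nu> l / norm_const * (\<Sum>z\<in>{1..r} - {x}. pmf (obs_law R z) w)"
    by (simp only: sum_distrib_left)
  also have "(\<Sum>z\<in>{1..r} - {x}. pmf (obs_law R z) w) = (\<Sum>z\<in>{1..r}. pmf (obs_law R z) w) - pmf (obs_law R x) w"
    using x by (simp add: sum_diff1)
  also have "?f x = a * pmf \<mu> l / norm_const * pmf (obs_law R x) w"
    by (simp add: pmf_child_attr[OF x])
  finally show ?thesis
    by (simp add: diff_divide_distrib algebra_simps)
qed

lemma l1_dist_child_obs:
  assumes x: "x \<in> {1..r}" and y: "y \<in> {1..r}"
  shows "l1_dist (child_obs R x) (child_obs R y) =
    ennreal (\<Sum>l\<in>UNIV. \<bar>a * pmf \<mu> l - b * pmf \<nu> l\<bar> / norm_const) * l1_dist (obs_law R x) (obs_law R y)"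
proof -
  let ?c = "\<lambda>l. \<bar>a * pmf \<mu> l - b * pmf \<nu> l\<bar> / norm_const"
  have pointwise: "\<bar>pmf (child_obs R x) (l, w) - pmf (child_obs R y) (l, w)\<bar>
      = ?c l * \<bar>pmf (obs_law R x) w - pmf (obs_law R y) w\<bar>" for l w
  proof -
    have "pmf (child_obs R x) (l, w) - pmf (child_obs R y) (l, w)
        = (a * pmf \<mu> l - b * pmf \<nu> l) / norm_const * (pmf (obs_law R x) w - pmf (obs_law R y) w)"
      unfolding pmf_child_obs[OF x] pmf_child_obs[OF y] by (simp add: algebra_simps)
    then show ?thesis using norm_const_pos by (simp add: abs_mult)
  qed
  have c_nonneg: "?c l \<ge> 0" for l using norm_const_pos by simp
  have "l1_dist (child_obs R x) (child_obs R y) =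
      (\<integral>\<^sup>+ l. \<integral>\<^sup>+ w. ennreal \<bar>pmf (child_obs R x) (l, w) - pmf (child_obs R y) (l, w)\<bar>
        \<partial>count_space UNIV \<partial>count_space UNIV)"
    unfolding l1_dist_def by (rule nn_integral_fst_count_space[symmetric])
  also have "\<dots> = (\<integral>\<^sup>+ l. ennreal (?c l) * l1_dist (obs_law R x) (obs_law R y) \<partial>count_space UNIV)"
  proof (intro nn_integral_cong)
    fix l
    have "(\<integral>\<^sup>+ w. ennreal \<bar>pmf (child_obs R x) (l, w) - pmf (child_obs R y) (l, w)\<bar> \<partial>count_space UNIV)
        = (\<integral>\<^sup>+ w. ennreal (?c l) * ennreal \<bar>pmf (obs_law R x) w - pmf (obs_law R y) w\<bar> \<partial>count_space UNIV)"
      by (simp only: pointwise ennreal_mult[OF c_nonneg abs_ge_zero])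
    then show "(\<integral>\<^sup>+ w. ennreal \<bar>pmf (child_obs R x) (l, w) - pmf (child_obs R y) (l, w)\<bar> \<partial>count_space UNIV)
        = ennreal (?c l) * l1_dist (obs_law R x) (obs_law R y)"
      by (simp add: nn_integral_cmult l1_dist_def)
  qed
  also have "\<dots> = (\<Sum>l\<in>UNIV. ennreal (?c l)) * l1_dist (obs_law R x) (obs_law R y)"
    by (simp add: nn_integral_count_space_finite sum_distrib_right)
  finally show ?thesis using c_nonneg by (simp add: sum_ennreal)
qed

lemma gw_d_times_factor:
  "gw_d r a b \<omega> * (\<Sum>l\<in>UNIV. \<bar>a * pmf \<mu> l - b * pmf \<nu> l\<bar> / norm_const) = \<omega> * gw_tau r a b \<mu> \<nu>"
  using norm_const_pos unfolding gw_d_def gw_tau_def sum_divide_distrib[symmetric] by simp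

lemma gw_tau_nonneg: "gw_tau r a b \<mu> \<nu> \<ge> 0"
  unfolding gw_tau_def using a_pos b_pos by (simp add: sum_nonneg)

lemma l1_dist_obs_law_Suc:
  assumes \<omega>: "\<omega> > 0" and x: "x \<in> {1..r}" and y: "y \<in> {1..r}"
  shows "l1_dist (obs_law (Suc R) x) (obs_law (Suc R) y)
    \<le> ennreal (\<omega> * gw_tau r a b \<mu> \<nu>) * l1_dist (obs_law R x) (obs_law R y)"
proof -
  let ?d = "gw_d r a b \<omega>"
  let ?c = "\<Sum>l\<in>UNIV. \<bar>a * pmf \<mu> l - b * pmf \<nu> l\<bar> / norm_const"
  have d_pos: "?d > 0"
    unfolding gw_d_def using norm_const_pos \<omega> a_pos b_pos r2 by simp
  have c_nonneg: "?c \<ge> 0"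
    using norm_const_pos by (intro sum_nonneg divide_nonneg_nonneg) auto
  have "l1_dist (obs_law (Suc R) x) (obs_law (Suc R) y) \<le>
     (\<integral>\<^sup>+ k. l1_dist (map_pmf (Node None) (replicate_pmf k (child_obs R x)))
                     (map_pmf (Node None) (replicate_pmf k (child_obs R y))) \<partial>poisson_pmf ?d)"
    unfolding obs_law_Suc by (rule l1_dist_bind_mixture)
  also have "\<dots> \<le> (\<integral>\<^sup>+ k. of_nat k * l1_dist (child_obs R x) (child_obs R y) \<partial>poisson_pmf ?d)"
    by (intro nn_integral_mono order.trans[OF l1_dist_map l1_dist_replicate])
  also have "\<dots> = ennreal ?d * l1_dist (child_obs R x) (child_obs R y)"
    by (simp add: nn_integral_multc poisson_mean[OF d_pos])
  also have "\<dots> = ennreal (?d * ?c) * l1_dist (obs_law R x) (obs_law R y)"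
    using d_pos c_nonneg by (simp add: l1_dist_child_obs[OF x y] ennreal_mult mult.assoc)
  finally show ?thesis by (simp only: gw_d_times_factor)
qed

lemma l1_dist_obs_law:
  assumes \<omega>: "\<omega> > 0" and x: "x \<in> {1..r}" and y: "y \<in> {1..r}"
  shows "l1_dist (obs_law R x) (obs_law R y) \<le> 2 * ennreal (\<omega> * gw_tau r a b \<mu> \<nu>) ^ R"
proof (induction R)
  case 0 then show ?case by (simp add: l1_dist_le_2)
next
  case (Suc R)
  have "l1_dist (obs_law (Suc R) x) (obs_law (Suc R) y)
      \<le> ennreal (\<omega> * gw_tau r a b \<mu> \<nu>) * l1_dist (obs_law R x) (obs_law R y)"
    by (rule l1_dist_obs_law_Suc[OF \<omega> x y])
  also have "\<dots> \<le> ennreal (\<omega> * gw_tau r a b \<mu> \<nu>) * (2 * ennreal (\<omega> * gw_tau r a b \<mu> \<nu>) ^ R)"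
    by (intro mult_left_mono Suc.IH) simp
  finally show ?case by (simp add: mult_ac)
qed

end

section \<open>The posterior of the root attribute\<close>

abbreviation obs_marginal :: "nat \<Rightarrow> (nat option, 'l) ltree pmf" where
  "obs_marginal R \<equiv> map_pmf (observe R) (gw_joint r a b \<omega> \<mu> \<nu> R)"

lemma obs_marginal_eq: "obs_marginal R = bind_pmf (pmf_of_set {1..r}) (obs_law R)"
  unfolding gw_joint_def map_bind_pmf by (rule refl)

lemma root_attr_gw_tree: "t \<in> set_pmf (gw_tree r a b \<omega> \<mu> \<nu> R z) \<Longrightarrow> root_attr t = z"
  by (cases R) auto

lemma prob_root_and_observe:
  assumes r: "r \<ge> 1" and x: "x \<in> {1..r}"
  shows "measure_pmf.prob (gw_joint r a b \<omega> \<mu> \<nu> R) {t. root_attr t = x \<and> observe R t = w}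
    = pmf (obs_law R x) w / real r"
proof -
  let ?g = "\<lambda>t. (root_attr t, observe R t)"
  have "map_pmf ?g (gw_joint r a b \<omega> \<mu> \<nu> R) =
      bind_pmf (pmf_of_set {1..r}) (\<lambda>z. map_pmf (Pair z) (obs_law R z))"
    unfolding gw_joint_def map_bind_pmf pmf.map_comp
    by (intro bind_pmf_cong refl map_pmf_cong) (auto simp: root_attr_gw_tree)
  moreover have "measure_pmf.prob (gw_joint r a b \<omega> \<mu> \<nu> R) {t. root_attr t = x \<and> observe R t = w}
      = pmf (map_pmf ?g (gw_joint r a b \<omega> \<mu> \<nu> R)) (x, w)"
    by (simp add: pmf_map vimage_def)
  ultimately have "measure_pmf.prob (gw_joint r a b \<omega> \<mu> \<nu> R) {t. root_attr t = x \<and> observe R t = w}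
      = (\<Sum>z\<in>{1..r}. pmf (map_pmf (Pair z) (obs_law R z)) (x, w)) / real r"
    using r by (simp add: pmf_bind integral_pmf_of_set)
  also have "\<dots> = (\<Sum>z\<in>{1..r}. if z = x then pmf (obs_law R z) w else 0) / real r"
    by (intro arg_cong[where f="\<lambda>u. u / real r"] sum.cong refl)
       (auto simp: pmf_map[of "Pair _"] vimage_def measure_pmf_single[symmetric])
  finally show ?thesis using x by simp
qed

lemma root_posterior_eq:
  assumes r: "r \<ge> 1" and x: "x \<in> {1..r}"
  shows "root_posterior r a b \<omega> \<mu> \<nu> R w x = (pmf (obs_law R x) w / pmf (obs_marginal R) w) / real r"
  unfolding root_posterior_def prob_root_and_observe[OF r x]
  by (simp add: pmf_map vimage_def)

lemma root_posterior_deviation_bound: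
  assumes r2: "r \<ge> 2" and "a > 0" "b > 0" and \<omega>: "\<omega> > 0"
    and x: "x \<in> {1..r}" and eps: "\<epsilon> > 0"
  shows "measure_pmf.prob (gw_joint r a b \<omega> \<mu> \<nu> R)
      {t. \<bar>root_posterior r a b \<omega> \<mu> \<nu> R (observe R t) x - 1 / real r\<bar> > \<epsilon>}
    \<le> 2 * (\<omega> * gw_tau r a b \<mu> \<nu>) ^ R / (real r * \<epsilon>)"
proof -
  define q where "q = \<omega> * gw_tau r a b \<mu> \<nu>"
  have q_nonneg: "q \<ge> 0" using gw_tau_nonneg[OF assms(1-3)] \<omega> by (simp add: q_def)
  have r_pos: "real r > 0" using r2 by simp
  have r1: "r \<ge> 1" using r2 by simp
  have r_eps_pos: "real r * \<epsilon> > 0" using r_pos eps by simp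
  have deviation_iff: "\<bar>u / real r - 1 / real r\<bar> > \<epsilon> \<longleftrightarrow> \<bar>u - 1\<bar> > real r * \<epsilon>" for u
    using r_pos by (simp add: diff_divide_distrib[symmetric] field_simps)
  have "{t. \<bar>root_posterior r a b \<omega> \<mu> \<nu> R (observe R t) x - 1 / real r\<bar> > \<epsilon>}
    = observe R -` {w. real r * \<epsilon> < \<bar>pmf (obs_law R x) w / pmf (obs_marginal R) w - 1\<bar>}"
    by (simp only: vimage_def mem_Collect_eq root_posterior_eq[OF r1 x] deviation_iff)
  then have "measure_pmf.prob (gw_joint r a b \<omega> \<mu> \<nu> R)
      {t. \<bar>root_posterior r a b \<omega> \<mu> \<nu> R (observe R t) x - 1 / real r\<bar> > \<epsilon>}
    = measure_pmf.prob (obs_marginal R)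
      {w. real r * \<epsilon> < \<bar>pmf (obs_law R x) w / pmf (obs_marginal R) w - 1\<bar>}"
    by (simp only: measure_map_pmf)
  moreover have "ennreal (real r * \<epsilon> * measure_pmf.prob (obs_marginal R)
      {w. real r * \<epsilon> < \<bar>pmf (obs_law R x) w / pmf (obs_marginal R) w - 1\<bar>}) \<le> ennreal (2 * q ^ R)"
  proof -
    have "l1_dist (obs_law R x) (obs_marginal R)
        \<le> (\<integral>\<^sup>+ z. l1_dist (obs_law R x) (obs_law R z) \<partial>pmf_of_set {1..r})"
      using l1_dist_bind_mixture[of "pmf_of_set {1..r}" "\<lambda>_. obs_law R x" "obs_law R"]
      by (simp add: obs_marginal_eq)
    also have "\<dots> \<le> (\<integral>\<^sup>+ z. 2 * ennreal q ^ R \<partial>pmf_of_set {1..r})"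
      using r2 by (intro nn_integral_mono_AE)
        (auto simp: AE_measure_pmf_iff q_def intro!: l1_dist_obs_law[OF assms(1-4) x])
    also have "\<dots> = ennreal (2 * q ^ R)"
      using q_nonneg by (simp add: measure_pmf.emeasure_space_1 ennreal_mult ennreal_power)
    finally show ?thesis by (rule order.trans[OF l1_dist_ratio_deviation[OF r_eps_pos]])
  qed
  then have "real r * \<epsilon> * measure_pmf.prob (obs_marginal R)
      {w. real r * \<epsilon> < \<bar>pmf (obs_law R x) w / pmf (obs_marginal R) w - 1\<bar>} \<le> 2 * q ^ R"
    using q_nonneg by (simp add: ennreal_le_iff)
  ultimately show ?thesis
    using r_eps_pos by (simp add: q_def pos_le_divide_eq mult.commute)
qed

end

theorem lemma2:
  fixes r :: nat and a b \<omega> :: real and \<mu> \<nu> :: "('l::finite) pmf" and x :: nat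
  assumes "r \<ge> 2" and "a > 0" and "b > 0" and "\<omega> > 0" and "\<mu> \<noteq> \<nu>"
    and "\<omega> < 1 / gw_tau r a b \<mu> \<nu>"
    and "x \<in> {1..r}"
  shows "\<forall>\<epsilon>>0. (\<lambda>R. measure_pmf.prob (gw_joint r a b \<omega> \<mu> \<nu> R)
            {t. \<bar>root_posterior r a b \<omega> \<mu> \<nu> R (observe R t) x - 1 / real r\<bar> > \<epsilon>})
          \<longlonglongrightarrow> 0"
proof (intro allI impI)
  fix \<epsilon> :: real assume eps: "\<epsilon> > 0"
  define q where "q = \<omega> * gw_tau r a b \<mu> \<nu>"
  have "gw_tau r a b \<mu> \<nu> \<ge> 0" by (rule gw_tau_nonneg[OF assms(1-3)])
  moreover have "gw_tau r a b \<mu> \<nu> \<noteq> 0" using assms(4,6) by auto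
  ultimately have q_nonneg: "q \<ge> 0" and q_less_1: "q < 1"
    using assms(4,6) by (simp_all add: q_def field_simps)
  have limit: "(\<lambda>R. 2 * q ^ R / (real r * \<epsilon>)) \<longlonglongrightarrow> 0"
    using q_nonneg q_less_1 by (intro tendsto_divide_zero tendsto_mult_right_zero LIMSEQ_power_zero) auto
  have bound: "measure_pmf.prob (gw_joint r a b \<omega> \<mu> \<nu> R)
      {t. \<bar>root_posterior r a b \<omega> \<mu> \<nu> R (observe R t) x - 1 / real r\<bar> > \<epsilon>}
    \<le> 2 * q ^ R / (real r * \<epsilon>)" for R
    unfolding q_def by (rule root_posterior_deviation_bound[OF assms(1-4,7) eps])
  show "(\<lambda>R. measure_pmf.prob (gw_joint r a b \<omega> \<mu> \<nu> R)
      {t. \<bar>root_posterior r a b \<omega> \<mu> \<nu> R (observe R t) x - 1 / real r\<bar> > \<epsilon>}) \<longlonglongrightarrow> 0"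
    by (rule tendsto_sandwich[OF _ _ tendsto_const limit]) (simp_all add: bound)
qed

end
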